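(* Let $K$ be a real biquadratic field with $\operatorname{sgnrk}(K)\ge 3$, and let $K_i=\mathbb{Q}(\sqrt{D_i})$, $1\le i\le 3$, be its three quadratic subfields, with $D_i>1$ squarefree. Then for each $1\le i\le 3$ there exists a unit $\eta_i\in\mathcal{O}_K^\times$ with $\operatorname{sgn}(\eta_i)=\operatorname{sgn}(\sqrt{D_i})$.
   Context: A real biquadratic field is $K=\mathbb{Q}(\sqrt{D_1},\sqrt{D_2})$ of degree $4$ with $D_1,D_2>1$ squarefree integers. For $\alpha\in K^\times$, $\operatorname{sgn}(\alpha)\in\mathbb{F}_2^4$ records the signs of its four real embeddings ($0$ for positive, $1$ for negative). $\operatorname{sgnrk}(K)$ is the $\mathbb{F}_2$-dimension of the unit signature group $\{\operatorname{sgn}(\eta):\eta\in\mathcal{O}_K^\times\}$. *)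

theory Defs
  imports "HOL-Analysis.Analysis" "HOL-Library.Z2" "HOL-Computational_Algebra.Squarefree"
begin

text \<open>The real biquadratic field K = Q(sqrt D1, sqrt D2) is represented concretely:
  an element is a quadruple (a,b,c,d) of rationals standing for
  a + b sqrt D1 + c sqrt D2 + d sqrt (D1 D2).  The four real embeddings are indexed
  by sigma = (e1,e2) :: bool * bool, sending sqrt D1 to -sqrt D1 iff e1 and
  sqrt D2 to -sqrt D2 iff e2.\<close>

definition real_biquadratic :: "int \<Rightarrow> int \<Rightarrow> bool" where
  "real_biquadratic D1 D2 \<longleftrightarrow> D1 > 1 \<and> D2 > 1 \<and> squarefree D1 \<and> squarefree D2 \<and> D1 \<noteq> D2"

definition bq_emb :: "int \<Rightarrow> int \<Rightarrow> bool \<times> bool \<Rightarrow> rat \<times> rat \<times> rat \<times> rat \<Rightarrow> real" where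
  "bq_emb D1 D2 \<sigma> x = (case x of (a, b, c, d) \<Rightarrow>
     let s1 = (if fst \<sigma> then -1 else 1 :: real); s2 = (if snd \<sigma> then -1 else 1 :: real) in
     of_rat a + of_rat b * s1 * sqrt (of_int D1) + of_rat c * s2 * sqrt (of_int D2)
       + of_rat d * (s1 * s2) * sqrt (of_int (D1 * D2)))"

abbreviation bq_val :: "int \<Rightarrow> int \<Rightarrow> rat \<times> rat \<times> rat \<times> rat \<Rightarrow> real" where
  "bq_val D1 D2 \<equiv> bq_emb D1 D2 (False, False)"

definition bq_unit :: "int \<Rightarrow> int \<Rightarrow> rat \<times> rat \<times> rat \<times> rat \<Rightarrow> bool" where
  "bq_unit D1 D2 x \<longleftrightarrow> algebraic_int (bq_val D1 D2 x) \<and>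
     (\<exists>y. algebraic_int (bq_val D1 D2 y) \<and> bq_val D1 D2 x * bq_val D1 D2 y = 1)"

definition bq_sgn :: "int \<Rightarrow> int \<Rightarrow> rat \<times> rat \<times> rat \<times> rat \<Rightarrow> bit ^ (bool \<times> bool)" where
  "bq_sgn D1 D2 x = (\<chi> \<sigma>. if bq_emb D1 D2 \<sigma> x < 0 then 1 else 0)"

definition sgnrk :: "int \<Rightarrow> int \<Rightarrow> nat" where
  "sgnrk D1 D2 = vec.dim (bq_sgn D1 D2 ` {x. bq_unit D1 D2 x})"

end

theory Submission
  imports Defs "Jordan_Normal_Form.Char_Poly"
begin

text \<open>The signatures of units form an F_2-subspace S of F_2^4 that contains (1,1,1,1) and,
  the four embeddings being permuted by the Galois group (Z/2)^2, is stable under translation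
  by the group.  Since s^2 = D with sqrt D irrational while the trace of s is rational, exactly
  two conjugates of s are negative, so v = sgn s has weight 2.  If S contained a vector x of odd
  weight, then x + tau x would equal v or v + (1,1,1,1) for a suitable tau, putting v in S;
  otherwise S lies in the three-dimensional space of even vectors, which it fills because
  dim S >= 3.  That S is closed under addition rests on products of algebraic integers being
  algebraic integers, proved with Kronecker products of integer matrices.\<close>

section \<open>Products of algebraic integers\<close>

text \<open>Jordan_Normal_Form and Finite_Cartesian_Product both write vector indexing as $;
  the matrix reading is used in this section only.\<close>
no_notation Finite_Cartesian_Product.vec_nth (infixl "$" 90)

lemma eigenvalue_of_int_mat_imp_algebraic_int:
  fixes x :: "'a :: field_char_0"
  assumes "A \<in> carrier_mat n n" and "eigenvalue (map_mat of_int A) x"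
  shows "algebraic_int x"
proof -
  have "map_mat of_int A \<in> carrier_mat n n" using assms(1) by simp
  then have "poly (char_poly (map_mat of_int A)) x = 0"
    using assms(2) eigenvalue_root_char_poly by blast
  also have "char_poly (map_mat of_int A) = map_poly of_int (char_poly A)"
    by (rule of_int_hom.char_poly_hom[OF assms(1)])
  finally show ?thesis
    using degree_monic_char_poly[OF assms(1)] unfolding algebraic_int_altdef_ipoly by auto
qed

definition companion_mat :: "int poly \<Rightarrow> int mat" where
  "companion_mat p = mat (degree p) (degree p)
     (\<lambda>(i, j). if i + 1 < degree p then (if j = i + 1 then 1 else 0) else - coeff p j)"

lemma companion_mat_carrier: "companion_mat p \<in> carrier_mat (degree p) (degree p)"
  by (simp add: companion_mat_def)

lemma companion_mat_mult_powers:
  fixes x :: "'a :: field_char_0"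
  assumes root: "poly (map_poly of_int p) x = 0" and monic: "lead_coeff p = 1"
  defines "n \<equiv> degree p"
  shows "map_mat of_int (companion_mat p) *\<^sub>v vec n (\<lambda>i. x ^ i) = x \<cdot>\<^sub>v vec n (\<lambda>i. x ^ i)"
proof (rule eq_vecI)
  have top: "x ^ n = - (\<Sum>j<n. of_int (coeff p j) * x ^ j)"
    using root monic
    by (simp add: poly_altdef degree_map_poly coeff_map_poly n_def lessThan_Suc_atMost[symmetric]
        algebra_simps eq_neg_iff_add_eq_0)
  fix i assume "i < dim_vec (x \<cdot>\<^sub>v vec n (\<lambda>i. x ^ i))"
  then have i: "i < n" by simp
  have "(map_mat of_int (companion_mat p) *\<^sub>v vec n (\<lambda>i. x ^ i)) $ i =
      (\<Sum>j<n. of_int (companion_mat p $$ (i, j)) * x ^ j)"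
    using i by (simp add: companion_mat_def n_def scalar_prod_def atLeast0LessThan row_def)
  also have "\<dots> = x ^ Suc i"
  proof (cases "i + 1 < n")
    case True
    then have "(\<Sum>j<n. of_int (companion_mat p $$ (i, j)) * x ^ j) = (\<Sum>j<n. if j = Suc i then x ^ j else 0)"
      using i by (intro sum.cong) (auto simp: companion_mat_def n_def)
    then show ?thesis using True by simp
  next
    case False
    then have "Suc i = n" using i by simp
    then show ?thesis using i by (simp add: companion_mat_def top sum_negf flip: n_def)
  qed
  finally show "(map_mat of_int (companion_mat p) *\<^sub>v vec n (\<lambda>i. x ^ i)) $ i =
      (x \<cdot>\<^sub>v vec n (\<lambda>i. x ^ i)) $ i"
    using i by simp
qed (simp add: companion_mat_def n_def)

lemma algebraic_int_imp_eigenvalue_of_int_mat: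
  fixes x :: "'a :: field_char_0"
  assumes "algebraic_int x"
  shows "\<exists>n (A :: int mat). A \<in> carrier_mat n n \<and> eigenvalue (map_mat of_int A) x"
proof -
  obtain p where root: "poly (map_poly of_int p) x = 0" and monic: "lead_coeff p = 1"
    using assms unfolding algebraic_int_altdef_ipoly by blast
  have "degree p > 0"
    using root monic by (cases "degree p") (auto elim: degree_eq_zeroE)
  then have "vec (degree p) (\<lambda>i. x ^ i) \<noteq> 0\<^sub>v (degree p)"
    by (auto dest!: arg_cong[of _ _ "\<lambda>w. w $ 0"])
  then have "eigenvector (map_mat of_int (companion_mat p)) (vec (degree p) (\<lambda>i. x ^ i)) x"
    unfolding eigenvector_def using companion_mat_mult_powers[OF root monic] companion_mat_carrier[of p]
    by simp
  then show ?thesis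
    using companion_mat_carrier unfolding eigenvalue_def by blast
qed

lemma mult_add_less_mult:
  fixes i j n m :: nat
  assumes "i < n" "j < m"
  shows "i * m + j < n * m"
proof -
  have "i * m + j < Suc i * m" using assms(2) by simp
  also have "\<dots> \<le> n * m" using assms(1) by (intro mult_le_mono1) simp
  finally show ?thesis .
qed

lemma sum_lessThan_mult_div_mod:
  fixes n m :: nat and f :: "nat \<Rightarrow> nat \<Rightarrow> 'a :: comm_monoid_add"
  shows "(\<Sum>l<n * m. f (l div m) (l mod m)) = (\<Sum>i<n. \<Sum>j<m. f i j)"
proof (cases "m = 0")
  case False
  have "(\<Sum>l<n * m. f (l div m) (l mod m)) = (\<Sum>(i, j)\<in>{..<n} \<times> {..<m}. f i j)"
    by (rule sum.reindex_bij_witness[where i = "\<lambda>(i, j). i * m + j" and j = "\<lambda>l. (l div m, l mod m)"])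
       (use False mult_add_less_mult in \<open>auto simp: less_mult_imp_div_less\<close>)
  then show ?thesis by (simp add: sum.cartesian_product)
qed simp

lemma div_mod_less_of_less_mult:
  fixes k n m :: nat
  assumes "k < n * m"
  shows "k div m < n" "k mod m < m"
proof -
  have "m > 0" using assms by (cases m) auto
  then show "k div m < n" "k mod m < m"
    using assms by (simp_all add: less_mult_imp_div_less)
qed

text \<open>Pairs of indices (i, j) are flattened to i * m + j, where m is the size of the
  second factor.\<close>
definition kron_mat :: "'a :: comm_ring_1 mat \<Rightarrow> 'a mat \<Rightarrow> 'a mat" where
  "kron_mat A B = mat (dim_row A * dim_row B) (dim_col A * dim_col B)
     (\<lambda>(k, l). A $$ (k div dim_row B, l div dim_col B) * B $$ (k mod dim_row B, l mod dim_col B))"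

definition kron_vec :: "'a :: comm_ring_1 vec \<Rightarrow> 'a vec \<Rightarrow> 'a vec" where
  "kron_vec v u = vec (dim_vec v * dim_vec u) (\<lambda>k. v $ (k div dim_vec u) * u $ (k mod dim_vec u))"

lemma kron_vec_carrier:
  "v \<in> carrier_vec n \<Longrightarrow> u \<in> carrier_vec m \<Longrightarrow> kron_vec v u \<in> carrier_vec (n * m)"
  by (simp add: kron_vec_def)

lemma kron_mat_carrier:
  "A \<in> carrier_mat n n \<Longrightarrow> B \<in> carrier_mat m m \<Longrightarrow> kron_mat A B \<in> carrier_mat (n * m) (n * m)"
  by (simp add: kron_mat_def)

lemma kron_vec_smult: "kron_vec (a \<cdot>\<^sub>v v) (b \<cdot>\<^sub>v u) = (a * b) \<cdot>\<^sub>v kron_vec v u"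
proof (rule eq_vecI)
  fix k assume "k < dim_vec ((a * b) \<cdot>\<^sub>v kron_vec v u)"
  then have k: "k < dim_vec v * dim_vec u" by (simp add: kron_vec_def)
  then show "kron_vec (a \<cdot>\<^sub>v v) (b \<cdot>\<^sub>v u) $ k = ((a * b) \<cdot>\<^sub>v kron_vec v u) $ k"
    using div_mod_less_of_less_mult[OF k] by (simp add: kron_vec_def mult_ac)
qed (simp add: kron_vec_def)

lemma nonzero_vec_index:
  assumes "v \<in> carrier_vec n" "v \<noteq> 0\<^sub>v n"
  obtains i where "i < n" "v $ i \<noteq> 0"
  using assms by (metis carrier_vecD eq_vecI index_zero_vec)

lemma kron_vec_nonzero:
  fixes v u :: "'a :: idom vec"
  assumes "v \<in> carrier_vec n" "v \<noteq> 0\<^sub>v n" "u \<in> carrier_vec m" "u \<noteq> 0\<^sub>v m"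
  shows "kron_vec v u \<noteq> 0\<^sub>v (n * m)"
proof -
  obtain i where i: "i < n" "v $ i \<noteq> 0" using assms(1,2) by (rule nonzero_vec_index)
  obtain j where j: "j < m" "u $ j \<noteq> 0" using assms(3,4) by (rule nonzero_vec_index)
  have "i * m + j < n * m" using i(1) j(1) by (rule mult_add_less_mult)
  moreover have "kron_vec v u $ (i * m + j) \<noteq> 0"
    using assms(1,3) i j \<open>i * m + j < n * m\<close> by (simp add: kron_vec_def)
  ultimately show ?thesis by auto
qed

lemma map_mat_of_int_kron_mat:
  "map_mat of_int (kron_mat A B) = kron_mat (map_mat of_int A) (map_mat of_int B)"
  by (rule eq_matI) (simp_all add: kron_mat_def div_mod_less_of_less_mult)

lemma kron_mat_mult_kron_vec:
  assumes "A \<in> carrier_mat n n" "B \<in> carrier_mat m m" "v \<in> carrier_vec n" "u \<in> carrier_vec m"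
  shows "kron_mat A B *\<^sub>v kron_vec v u = kron_vec (A *\<^sub>v v) (B *\<^sub>v u)"
proof (rule eq_vecI)
  fix k assume "k < dim_vec (kron_vec (A *\<^sub>v v) (B *\<^sub>v u))"
  then have k: "k < n * m" using assms by (simp add: kron_vec_def)
  note k_div_mod = div_mod_less_of_less_mult[OF k]
  have "(kron_mat A B *\<^sub>v kron_vec v u) $ k = (\<Sum>l<n * m. kron_mat A B $$ (k, l) * kron_vec v u $ l)"
    using assms k by (simp add: kron_mat_def kron_vec_def scalar_prod_def atLeast0LessThan)
  also have "\<dots> = (\<Sum>l<n * m. (A $$ (k div m, l div m) * v $ (l div m)) *
                              (B $$ (k mod m, l mod m) * u $ (l mod m)))"
    using assms k by (intro sum.cong) (simp_all add: kron_mat_def kron_vec_def mult_ac)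
  also have "\<dots> = (\<Sum>i<n. \<Sum>j<m. (A $$ (k div m, i) * v $ i) * (B $$ (k mod m, j) * u $ j))"
    by (rule sum_lessThan_mult_div_mod[where f = "\<lambda>i j. (A $$ (k div m, i) * v $ i) *
                                                        (B $$ (k mod m, j) * u $ j)"])
  also have "\<dots> = (\<Sum>i<n. A $$ (k div m, i) * v $ i) * (\<Sum>j<m. B $$ (k mod m, j) * u $ j)"
    by (simp add: sum_product)
  also have "\<dots> = kron_vec (A *\<^sub>v v) (B *\<^sub>v u) $ k"
    using assms k k_div_mod by (simp add: kron_vec_def scalar_prod_def atLeast0LessThan row_def)
  finally show "(kron_mat A B *\<^sub>v kron_vec v u) $ k = kron_vec (A *\<^sub>v v) (B *\<^sub>v u) $ k" .
qed (use assms in \<open>simp add: kron_mat_def kron_vec_def\<close>)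

lemma eigenvalue_of_int_mat_mult:
  fixes x y :: "'a :: field_char_0"
  assumes A: "A \<in> carrier_mat n n" "eigenvalue (map_mat of_int A) x"
    and B: "B \<in> carrier_mat m m" "eigenvalue (map_mat of_int B) y"
  shows "eigenvalue (map_mat of_int (kron_mat A B)) (x * y)"
proof -
  obtain v where v: "v \<in> carrier_vec n" "v \<noteq> 0\<^sub>v n" "map_mat of_int A *\<^sub>v v = x \<cdot>\<^sub>v v"
    using A unfolding eigenvalue_def eigenvector_def by auto
  obtain u where u: "u \<in> carrier_vec m" "u \<noteq> 0\<^sub>v m" "map_mat of_int B *\<^sub>v u = y \<cdot>\<^sub>v u"
    using B unfolding eigenvalue_def eigenvector_def by auto
  have "map_mat of_int (kron_mat A B) *\<^sub>v kron_vec v u = (x * y) \<cdot>\<^sub>v kron_vec v u"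
    using A(1) B(1) v u
    by (simp add: map_mat_of_int_kron_mat kron_mat_mult_kron_vec kron_vec_smult)
  moreover have "map_mat of_int (kron_mat A B) \<in> carrier_mat (n * m) (n * m)"
    using kron_mat_carrier[OF A(1) B(1)] by simp
  moreover have "kron_vec v u \<in> carrier_vec (n * m)" "kron_vec v u \<noteq> 0\<^sub>v (n * m)"
    using kron_vec_carrier[OF v(1) u(1)] kron_vec_nonzero[OF v(1,2) u(1,2)] by simp_all
  ultimately have "eigenvector (map_mat of_int (kron_mat A B)) (kron_vec v u) (x * y)"
    unfolding eigenvector_def by simp
  then show ?thesis unfolding eigenvalue_def by blast
qed

lemma algebraic_int_times:
  fixes x y :: "'a :: field_char_0"
  assumes "algebraic_int x" "algebraic_int y"
  shows "algebraic_int (x * y)"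
proof -
  obtain n A where A: "A \<in> carrier_mat n n" "eigenvalue (map_mat of_int A) x"
    using algebraic_int_imp_eigenvalue_of_int_mat[OF assms(1)] by blast
  obtain m B where B: "B \<in> carrier_mat m m" "eigenvalue (map_mat of_int B) y"
    using algebraic_int_imp_eigenvalue_of_int_mat[OF assms(2)] by blast
  show ?thesis
    using kron_mat_carrier[OF A(1) B(1)] eigenvalue_of_int_mat_mult[OF A B]
    by (rule eigenvalue_of_int_mat_imp_algebraic_int)
qed

no_notation Matrix.vec_index (infixl "$" 100)
notation Finite_Cartesian_Product.vec_nth (infixl "$" 90)

section \<open>Signature vectors\<close>

text \<open>The embeddings, indexed by bool \<times> bool, form the Galois group (Z/2)^2 with
  composition gal_comp; conjugating by \<tau> permutes the signs of an element by sig_translate \<tau>.\<close>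
definition gal_comp :: "bool \<times> bool \<Rightarrow> bool \<times> bool \<Rightarrow> bool \<times> bool" where
  "gal_comp \<sigma> \<tau> = (fst \<sigma> \<noteq> fst \<tau>, snd \<sigma> \<noteq> snd \<tau>)"

type_synonym signature = "bit ^ (bool \<times> bool)"

definition sig_translate :: "bool \<times> bool \<Rightarrow> signature \<Rightarrow> signature" where
  "sig_translate \<tau> v = (\<chi> \<sigma>. v $ gal_comp \<sigma> \<tau>)"

definition all_ones :: signature where
  "all_ones = (\<chi> \<sigma>. 1)"

definition parity :: "signature \<Rightarrow> bit" where
  "parity v = (\<Sum>\<sigma>\<in>UNIV. v $ \<sigma>)"

lemma sum_UNIV_bool_pair:
  "(\<Sum>\<sigma>\<in>UNIV. f \<sigma>) = f (False, False) + f (False, True) + f (True, False) + f (True, True)"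
  by (simp add: UNIV_Times_UNIV[symmetric] sum.cartesian_product[symmetric] UNIV_bool add.assoc)

lemma signature_eq_iff:
  "(v :: signature) = w \<longleftrightarrow>
     v $ (False, False) = w $ (False, False) \<and> v $ (False, True) = w $ (False, True) \<and>
     v $ (True, False) = w $ (True, False) \<and> v $ (True, True) = w $ (True, True)"
  by (auto simp: Finite_Cartesian_Product.vec_eq_iff all_bool_eq)

text \<open>An odd vector is, up to adding all_ones, a unit vector e_\<rho>; its translates
  e_\<rho> + e_(\<rho>+\<tau>) run through all vectors of weight 2 containing \<rho>, and every vector of
  weight 2 or its complement contains \<rho>.\<close>
lemma odd_parity_translate:
  assumes "parity x = 1" and "parity v = 0" "v \<noteq> 0" "v \<noteq> all_ones"
  shows "\<exists>\<tau>. x + sig_translate \<tau> x = v \<or> x + sig_translate \<tau> x = v + all_ones"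
  using assms unfolding parity_def sum_UNIV_bool_pair signature_eq_iff sig_translate_def gal_comp_def all_ones_def
    split_paired_Ex ex_bool_eq
  by (cases "x $ (False, False)"; cases "x $ (False, True)"; cases "x $ (True, False)"; cases "x $ (True, True)";
      cases "v $ (False, False)"; cases "v $ (False, True)"; cases "v $ (True, False)"; cases "v $ (True, True)")
     simp_all

lemma add_all_ones_all_ones: "v + all_ones + all_ones = v"
  by (simp add: signature_eq_iff all_ones_def add.assoc)

definition even_basis :: "bool \<times> bool \<Rightarrow> signature" where
  "even_basis \<sigma> = (\<chi> \<rho>. if \<rho> = (False, False) \<or> \<rho> = \<sigma> then 1 else 0)"

lemma even_parity_expansion:
  assumes "parity x = 0"
  shows "x = x $ (False, True) *s even_basis (False, True) + x $ (True, False) *s even_basis (True, False)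
           + x $ (True, True) *s even_basis (True, True)"
  using assms unfolding parity_def sum_UNIV_bool_pair signature_eq_iff even_basis_def
  by (cases "x $ (False, False)"; cases "x $ (False, True)"; cases "x $ (True, False)"; cases "x $ (True, True)")
     simp_all

text \<open>If every e \<sigma> is \<plusminus>r with r irrational, the sum of the e \<sigma> can only be rational
  when the signs cancel, i.e. exactly two of them are negative.\<close>
lemma sign_pattern_weight_two:
  fixes e :: "bool \<times> bool \<Rightarrow> real"
  assumes "r \<notin> \<rat>" "r > 0" "\<And>\<sigma>. e \<sigma> = r \<or> e \<sigma> = - r" "(\<Sum>\<sigma>\<in>UNIV. e \<sigma>) \<in> \<rat>"
  defines "v \<equiv> (\<chi> \<sigma>. if e \<sigma> < 0 then 1 else 0) :: signature"
  shows "parity v = 0 \<and> v \<noteq> 0 \<and> v \<noteq> all_ones"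
proof -
  define n where "n \<sigma> = (of_bool (e \<sigma> < 0) :: real)" for \<sigma>
  define N where "N = (\<Sum>\<sigma>\<in>UNIV. n \<sigma>)"
  have e_eq: "e \<sigma> = (1 - 2 * n \<sigma>) * r" for \<sigma>
    using assms(2) assms(3)[of \<sigma>] by (auto simp: n_def)
  have "(\<Sum>\<sigma>\<in>UNIV. e \<sigma>) = (\<Sum>\<sigma>\<in>UNIV. (1 - 2 * n \<sigma>) * r)"
    by (simp only: e_eq)
  also have "\<dots> = (4 - 2 * N) * r"
    unfolding N_def sum_UNIV_bool_pair by (simp add: algebra_simps)
  finally have sum_eq: "(\<Sum>\<sigma>\<in>UNIV. e \<sigma>) = (4 - 2 * N) * r" .
  have "N = 2"
  proof (rule ccontr)
    assume "N \<noteq> 2"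
    then have "r = (\<Sum>\<sigma>\<in>UNIV. e \<sigma>) / (4 - 2 * N)"
      unfolding sum_eq by simp
    moreover have "N \<in> \<rat>"
      unfolding N_def n_def by (intro Rats_sum) simp
    ultimately have "r \<in> \<rat>" using assms(4) by simp
    then show False using assms(1) by contradiction
  qed
  then show ?thesis
    unfolding N_def n_def v_def parity_def sum_UNIV_bool_pair signature_eq_iff all_ones_def
    by (cases "e (False, False) < 0"; cases "e (False, True) < 0"; cases "e (True, False) < 0";
        cases "e (True, True) < 0") simp_all
qed

text \<open>An odd vector x of S would put v or its complement x + \<tau>x into S, so S lies in the
  three-dimensional space of even vectors; as v is even but not in S, dim S < 3.\<close>
lemma weight_two_in_invariant_subspace:
  assumes S: "vec.subspace S" "\<And>\<tau> x. x \<in> S \<Longrightarrow> sig_translate \<tau> x \<in> S"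
      "all_ones \<in> S" "vec.dim S \<ge> 3"
    and v: "parity v = 0" "v \<noteq> 0" "v \<noteq> all_ones"
  shows "v \<in> S"
proof (rule ccontr)
  assume "v \<notin> S"
  have even: "parity x = 0" if "x \<in> S" for x
  proof (rule ccontr)
    assume "parity x \<noteq> 0"
    then have "parity x = 1" by simp
    then obtain \<tau> where "x + sig_translate \<tau> x = v \<or> x + sig_translate \<tau> x = v + all_ones"
      using odd_parity_translate v by blast
    moreover have "x + sig_translate \<tau> x \<in> S"
      using S(1,2) that by (intro vec.subspace_add)
    ultimately have "v \<in> S \<or> v + all_ones \<in> S" by auto
    then have "v \<in> S \<or> v + all_ones + all_ones \<in> S"
      using vec.subspace_add[OF S(1) _ S(3)] by blast
    then show False using \<open>v \<notin> S\<close> by (simp add: add_all_ones_all_ones)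
  qed
  define B where "B = even_basis ` {(False, True), (True, False), (True, True)}"
  have span_B: "x \<in> vec.span B" if "parity x = 0" for x
    by (subst even_parity_expansion[OF that])
       (intro vec.span_add vec.span_scale vec.span_base; simp add: B_def)
  have "S \<subseteq> vec.span B" using even span_B by blast
  moreover have "S \<noteq> vec.span B" using span_B[OF v(1)] \<open>v \<notin> S\<close> by blast
  moreover have "vec.span S = S" using S(1) by simp
  ultimately have "vec.span S \<subset> vec.span B" by (metis psubsetI)
  then have "vec.dim S < vec.dim B" by (rule vec.dim_psubset)
  also have "vec.dim B \<le> card B"
    by (rule vec.dim_le_card) (auto simp: B_def intro: vec.span_base)
  also have "card B \<le> 3"
    unfolding B_def by (rule order_trans[OF card_image_le]) auto
  finally show False using S(4) by simp
qed

section \<open>Arithmetic in the biquadratic field\<close>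

lemma sqrt_of_int_in_Rats_imp_square:
  assumes "n \<ge> 0" "sqrt (of_int n) \<in> \<rat>"
  obtains k where "n = k ^ 2"
proof -
  have "algebraic_int (sqrt (of_int n))" by (intro algebraic_int_sqrt) simp
  then have "sqrt (of_int n) \<in> \<int>" using assms(2) rational_algebraic_int_is_int by blast
  then obtain k where k: "sqrt (of_int n) = of_int k" by (auto elim: Ints_cases)
  have "(of_int n :: real) = of_int (k ^ 2)"
    using assms(1) real_sqrt_pow2[of "of_int n"] unfolding k by simp
  then show ?thesis by (intro that) (simp only: of_int_eq_iff)
qed

lemma sqrt_squarefree_irrational:
  fixes n :: int
  assumes "squarefree n" "n > 1"
  shows "sqrt (of_int n) \<notin> \<rat>"
proof
  assume "sqrt (of_int n) \<in> \<rat>"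
  moreover have "n \<ge> 0" using assms(2) by simp
  ultimately obtain k where k: "n = k ^ 2" using sqrt_of_int_in_Rats_imp_square by blast
  then have "is_unit k" using assms(1) by (simp add: squarefree_power_iff)
  then have "k ^ 2 = 1" by (simp add: zdvd1_eq abs_square_eq_1)
  then show False using k assms(2) by simp
qed

lemma squarefree_mult_eq_square_imp_eq:
  fixes D1 D2 :: int
  assumes "squarefree D1" "squarefree D2" "D1 > 0" "D2 > 0" "D1 * D2 = k ^ 2"
  shows "D1 = D2"
proof -
  have "D1 \<noteq> 0" "D2 \<noteq> 0" using assms(3,4) by simp_all
  have "D1 * D2 > 0" using assms(3,4) by simp
  then have "k \<noteq> 0" using assms(5) by auto
  have "multiplicity p D1 = multiplicity p D2" if p: "prime p" for p
  proof -
    have p': "prime_elem p" using p by (rule prime_imp_prime_elem)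
    have "multiplicity p D1 + multiplicity p D2 = multiplicity p (k ^ 2)"
      using \<open>D1 \<noteq> 0\<close> \<open>D2 \<noteq> 0\<close> assms(5) prime_elem_multiplicity_mult_distrib[OF p'] by metis
    also have "\<dots> = 2 * multiplicity p k"
      using p' \<open>k \<noteq> 0\<close> by (simp add: prime_elem_multiplicity_power_distrib)
    finally have "multiplicity p D1 + multiplicity p D2 = 2 * multiplicity p k" .
    moreover have "multiplicity p D1 \<le> 1" "multiplicity p D2 \<le> 1"
      using squarefree_factorial_semiring''[OF \<open>D1 \<noteq> 0\<close>] squarefree_factorial_semiring''[OF \<open>D2 \<noteq> 0\<close>]
        assms(1,2) p by blast+
    ultimately show ?thesis by presburger
  qed
  then have "normalize D1 = normalize D2"
    using \<open>D1 \<noteq> 0\<close> \<open>D2 \<noteq> 0\<close> by (intro multiplicity_eq_imp_eq) auto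
  then show ?thesis using assms(3,4) by simp
qed

lemma real_biquadratic_gt_1:
  assumes "real_biquadratic D1 D2"
  shows "D1 > 1" "D2 > 1"
  using assms unfolding real_biquadratic_def by blast+

lemma real_biquadratic_irrational:
  assumes "real_biquadratic D1 D2"
  shows "sqrt (of_int D1) \<notin> \<rat>" "sqrt (of_int D2) \<notin> \<rat>"
    and "sqrt (of_int D1) * sqrt (of_int D2) \<notin> \<rat>"
proof -
  have D: "D1 > 1" "D2 > 1" "squarefree D1" "squarefree D2" "D1 \<noteq> D2"
    using assms unfolding real_biquadratic_def by blast+
  show "sqrt (of_int D1) \<notin> \<rat>" "sqrt (of_int D2) \<notin> \<rat>"
    using sqrt_squarefree_irrational D(1-4) by blast+
  show "sqrt (of_int D1) * sqrt (of_int D2) \<notin> \<rat>"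
  proof
    assume "sqrt (of_int D1) * sqrt (of_int D2) \<in> \<rat>"
    then have "sqrt (of_int (D1 * D2)) \<in> \<rat>" by (simp add: real_sqrt_mult)
    moreover have "D1 * D2 \<ge> 0" using D(1,2) by simp
    ultimately obtain k where "D1 * D2 = k ^ 2" using sqrt_of_int_in_Rats_imp_square by blast
    then have "D1 = D2" using squarefree_mult_eq_square_imp_eq[OF D(3,4)] D(1,2) by simp
    then show False using D(5) by contradiction
  qed
qed

lemma Rats_add_mult_irrational_eq_0:
  fixes p q r :: real
  assumes "p \<in> \<rat>" "q \<in> \<rat>" "r \<notin> \<rat>" "p + q * r = 0"
  shows "p = 0"
proof (cases "q = 0")
  case False
  then have "r = - p / q" using assms(4) by (simp add: field_simps)
  then show ?thesis using assms(1-3) by simp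
qed (use assms in simp)

text \<open>Multiplying the relation by its three conjugates leaves relations with a single
  irrational term each, whose rational parts give a^2 = d1 b^2 = d2 c^2 = d1 d2 d^2.\<close>
lemma Rats_lin_indep_sqrt_basis:
  fixes a b c d r1 r2 :: real
  assumes r1: "r1 * r1 \<in> \<rat>" "r1 \<notin> \<rat>"
    and r2: "r2 * r2 \<in> \<rat>" "r2 \<notin> \<rat>"
    and r12: "r1 * r2 \<notin> \<rat>"
    and rat: "a \<in> \<rat>" "b \<in> \<rat>" "c \<in> \<rat>" "d \<in> \<rat>"
    and eq: "a + b * r1 + c * r2 + d * (r1 * r2) = 0"
  shows "a = 0 \<and> b = 0 \<and> c = 0 \<and> d = 0"
proof -
  define d1 d2 where "d1 = r1 * r1" and "d2 = r2 * r2"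
  have q: "d1 \<in> \<rat>" "d2 \<in> \<rat>" using r1 r2 by (simp_all add: d1_def d2_def)
  have "(a*a + d1*b*b - d2*c*c - d1*d2*d*d) + (2*a*b - 2*d2*c*d) * r1 =
        (a + b*r1 + c*r2 + d*(r1*r2)) * (a + b*r1 - c*r2 - d*(r1*r2))"
    by (simp add: d1_def d2_def algebra_simps)
  also have "\<dots> = 0" by (simp add: eq)
  finally have e1: "a*a + d1*b*b - d2*c*c - d1*d2*d*d = 0"
    by (rule Rats_add_mult_irrational_eq_0[rotated 3]) (use q rat r1(2) in simp_all)
  have "(a*a + d2*c*c - d1*b*b - d1*d2*d*d) + (2*a*c - 2*d1*b*d) * r2 =
        (a + b*r1 + c*r2 + d*(r1*r2)) * (a - b*r1 + c*r2 - d*(r1*r2))"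
    by (simp add: d1_def d2_def algebra_simps)
  also have "\<dots> = 0" by (simp add: eq)
  finally have e2: "a*a + d2*c*c - d1*b*b - d1*d2*d*d = 0"
    by (rule Rats_add_mult_irrational_eq_0[rotated 3]) (use q rat r2(2) in simp_all)
  have "(a*a + d1*d2*d*d - d1*b*b - d2*c*c) + (2*a*d - 2*b*c) * (r1*r2) =
        (a + b*r1 + c*r2 + d*(r1*r2)) * (a - b*r1 - c*r2 + d*(r1*r2))"
    by (simp add: d1_def d2_def algebra_simps)
  also have "\<dots> = 0" by (simp add: eq)
  finally have e3: "a*a + d1*d2*d*d - d1*b*b - d2*c*c = 0"
    by (rule Rats_add_mult_irrational_eq_0[rotated 3]) (use q rat r12 in simp_all)
  have sq: "a * a = d1 * (b * b)" "a * a = d2 * (c * c)" "a * a = d1 * d2 * (d * d)"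
    using e1 e2 e3 by (simp_all add: algebra_simps)
  have "b = 0"
  proof (rule ccontr)
    assume "b \<noteq> 0"
    then have "r1 * r1 = (a / b) * (a / b)" using sq(1) by (simp add: d1_def field_simps)
    then have "r1 = a / b \<or> r1 = - (a / b)" by (metis minus_mult_minus square_eq_iff)
    then show False using r1(2) rat by auto
  qed
  then have "a = 0" using sq(1) by simp
  moreover have "r1 \<noteq> 0" "r2 \<noteq> 0" using r1(2) r2(2) by auto
  ultimately have "c = 0" "d = 0" using sq(2,3) by (simp_all add: d1_def d2_def)
  with \<open>a = 0\<close> \<open>b = 0\<close> show ?thesis by simp
qed

type_synonym bq = "rat \<times> rat \<times> rat \<times> rat"

definition bq_eval :: "real \<Rightarrow> real \<Rightarrow> bq \<Rightarrow> real" where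
  "bq_eval t1 t2 x = (case x of (a, b, c, d) \<Rightarrow>
     of_rat a + of_rat b * t1 + of_rat c * t2 + of_rat d * (t1 * t2))"

definition bq_mult :: "int \<Rightarrow> int \<Rightarrow> bq \<Rightarrow> bq \<Rightarrow> bq" where
  "bq_mult D1 D2 x y = (case x of (a, b, c, d) \<Rightarrow> case y of (a', b', c', d') \<Rightarrow>
     (a * a' + of_int D1 * b * b' + of_int D2 * c * c' + of_int D1 * of_int D2 * d * d',
      a * b' + b * a' + of_int D2 * (c * d' + d * c'),
      a * c' + c * a' + of_int D1 * (b * d' + d * b'),
      a * d' + d * a' + b * c' + c * b'))"

definition bq_add :: "bq \<Rightarrow> bq \<Rightarrow> bq" where
  "bq_add x y = (case x of (a, b, c, d) \<Rightarrow> case y of (a', b', c', d') \<Rightarrow> (a + a', b + b', c + c', d + d'))"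

definition bq_of_rat :: "rat \<Rightarrow> bq" where
  "bq_of_rat c = (c, 0, 0, 0)"

fun bq_horner :: "int \<Rightarrow> int \<Rightarrow> int list \<Rightarrow> bq \<Rightarrow> bq" where
  "bq_horner D1 D2 [] x = bq_of_rat 0"
| "bq_horner D1 D2 (c # cs) x = bq_add (bq_of_rat (of_int c)) (bq_mult D1 D2 x (bq_horner D1 D2 cs x))"

lemma bq_eval_mult:
  assumes "t1 * t1 = of_int D1" "t2 * t2 = of_int D2"
  shows "bq_eval t1 t2 (bq_mult D1 D2 x y) = bq_eval t1 t2 x * bq_eval t1 t2 y"
proof -
  obtain a b c d a' b' c' d' where "x = (a, b, c, d)" "y = (a', b', c', d')"
    by (cases x; cases y) auto
  then show ?thesis unfolding bq_eval_def bq_mult_def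
    by (simp add: of_rat_add of_rat_mult flip: assms) (simp add: algebra_simps)
qed

lemma bq_eval_add: "bq_eval t1 t2 (bq_add x y) = bq_eval t1 t2 x + bq_eval t1 t2 y"
  by (cases x; cases y) (simp add: bq_eval_def bq_add_def of_rat_add algebra_simps)

lemma bq_eval_of_rat [simp]: "bq_eval t1 t2 (bq_of_rat c) = of_rat c"
  by (simp add: bq_eval_def bq_of_rat_def)

lemma bq_eval_horner:
  assumes "t1 * t1 = of_int D1" "t2 * t2 = of_int D2"
  shows "bq_eval t1 t2 (bq_horner D1 D2 (coeffs p) x) = poly (map_poly of_int p) (bq_eval t1 t2 x)"
proof (induction p rule: pCons_induct)
  case (pCons a p)
  then have "coeffs (pCons a p) = a # coeffs p" by (auto simp: cCons_def)
  moreover have "map_poly (of_int :: int \<Rightarrow> real) (pCons a p) = pCons (of_int a) (map_poly of_int p)"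
    by (rule map_poly_pCons) (use pCons.hyps in auto)
  ultimately show ?case using pCons.IH by (simp add: bq_eval_add bq_eval_mult[OF assms])
qed simp

definition sign_flip :: "bool \<Rightarrow> 'a :: ring_1" where
  "sign_flip b = (if b then -1 else 1)"

lemma bq_emb_eq_bq_eval:
  "bq_emb D1 D2 \<sigma> x =
    bq_eval (sign_flip (fst \<sigma>) * sqrt (of_int D1)) (sign_flip (snd \<sigma>) * sqrt (of_int D2)) x"
  by (cases x; cases \<sigma>) (auto simp: bq_emb_def bq_eval_def sign_flip_def Let_def real_sqrt_mult mult_ac)

lemma sign_flip_sqrt_square:
  assumes "D \<ge> 0"
  shows "(sign_flip b * sqrt (of_int D)) * (sign_flip b * sqrt (of_int D)) = of_int D"
  using assms by (simp add: sign_flip_def)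

lemma bq_emb_mult:
  assumes "real_biquadratic D1 D2"
  shows "bq_emb D1 D2 \<sigma> (bq_mult D1 D2 x y) = bq_emb D1 D2 \<sigma> x * bq_emb D1 D2 \<sigma> y"
  unfolding bq_emb_eq_bq_eval using real_biquadratic_gt_1[OF assms]
  by (intro bq_eval_mult sign_flip_sqrt_square) simp_all

lemma bq_emb_of_rat [simp]: "bq_emb D1 D2 \<sigma> (bq_of_rat c) = of_rat c"
  unfolding bq_emb_eq_bq_eval by simp

lemma bq_emb_horner:
  assumes "real_biquadratic D1 D2"
  shows "bq_emb D1 D2 \<sigma> (bq_horner D1 D2 (coeffs p) x) = poly (map_poly of_int p) (bq_emb D1 D2 \<sigma> x)"
  unfolding bq_emb_eq_bq_eval using real_biquadratic_gt_1[OF assms]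
  by (intro bq_eval_horner sign_flip_sqrt_square) simp_all

lemma bq_val_inj:
  assumes rb: "real_biquadratic D1 D2" and "bq_val D1 D2 x = bq_val D1 D2 y"
  shows "x = y"
proof -
  obtain a b c d a' b' c' d' where xy: "x = (a, b, c, d)" "y = (a', b', c', d')"
    by (cases x; cases y) auto
  define r1 r2 where "r1 = sqrt (of_int D1)" and "r2 = sqrt (of_int D2)"
  have "r1 * r1 \<in> \<rat>" "r2 * r2 \<in> \<rat>"
    using real_biquadratic_gt_1[OF rb] by (simp_all add: r1_def r2_def)
  moreover have "r1 \<notin> \<rat>" "r2 \<notin> \<rat>" "r1 * r2 \<notin> \<rat>"
    unfolding r1_def r2_def using real_biquadratic_irrational[OF rb] by auto
  moreover have "of_rat (a - a') + of_rat (b - b') * r1 + of_rat (c - c') * r2 + of_rat (d - d') * (r1 * r2) =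
      bq_val D1 D2 x - bq_val D1 D2 y"
    unfolding bq_emb_eq_bq_eval by (simp add: xy r1_def r2_def bq_eval_def sign_flip_def of_rat_diff algebra_simps)
  ultimately have "of_rat (a - a') = (0::real) \<and> of_rat (b - b') = (0::real) \<and>
                   of_rat (c - c') = (0::real) \<and> of_rat (d - d') = (0::real)"
    using assms(2) by (intro Rats_lin_indep_sqrt_basis[of r1 r2]) simp_all
  then show ?thesis using xy by simp
qed

text \<open>Conjugates inherit every polynomial relation over the rationals, since such a
  relation is an identity between coordinate vectors.\<close>
lemma algebraic_int_bq_emb:
  assumes rb: "real_biquadratic D1 D2" and "algebraic_int (bq_val D1 D2 x)"
  shows "algebraic_int (bq_emb D1 D2 \<sigma> x)"
proof -
  obtain p where p: "poly (map_poly of_int p) (bq_val D1 D2 x) = 0" "lead_coeff p = 1"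
    using assms(2) unfolding algebraic_int_altdef_ipoly by blast
  have "bq_horner D1 D2 (coeffs p) x = bq_of_rat 0"
    using p(1) by (intro bq_val_inj[OF rb]) (simp add: bq_emb_horner[OF rb])
  then have "poly (map_poly of_int p) (bq_emb D1 D2 \<sigma> x) = 0"
    using bq_emb_horner[OF rb, of \<sigma> p x] by simp
  then show ?thesis unfolding algebraic_int_altdef_ipoly using p(2) by blast
qed

lemma bq_emb_mult_eq_of_rat:
  assumes rb: "real_biquadratic D1 D2" and "bq_val D1 D2 x * bq_val D1 D2 y = of_rat c"
  shows "bq_emb D1 D2 \<sigma> x * bq_emb D1 D2 \<sigma> y = of_rat c"
proof -
  have "bq_mult D1 D2 x y = bq_of_rat c"
    using assms(2) by (intro bq_val_inj[OF rb]) (simp add: bq_emb_mult[OF rb])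
  then show ?thesis using bq_emb_mult[OF rb, of \<sigma> x y] by simp
qed

section \<open>Units and their signatures\<close>

definition bq_conj :: "bool \<times> bool \<Rightarrow> bq \<Rightarrow> bq" where
  "bq_conj \<tau> x = (case x of (a, b, c, d) \<Rightarrow>
     (a, sign_flip (fst \<tau>) * b, sign_flip (snd \<tau>) * c, sign_flip (fst \<tau>) * sign_flip (snd \<tau>) * d))"

lemma bq_emb_conj: "bq_emb D1 D2 \<sigma> (bq_conj \<tau> x) = bq_emb D1 D2 (gal_comp \<sigma> \<tau>) x"
  by (cases x; cases \<sigma>; cases \<tau>)
     (auto simp: bq_emb_def bq_conj_def gal_comp_def sign_flip_def Let_def of_rat_mult of_rat_minus)

lemma bq_unit_emb_nonzero:
  assumes rb: "real_biquadratic D1 D2" and "bq_unit D1 D2 x"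
  shows "bq_emb D1 D2 \<sigma> x \<noteq> 0"
proof -
  obtain y where "bq_val D1 D2 x * bq_val D1 D2 y = of_rat 1"
    using assms(2) by (auto simp: bq_unit_def)
  then have "bq_emb D1 D2 \<sigma> x * bq_emb D1 D2 \<sigma> y = of_rat 1"
    by (rule bq_emb_mult_eq_of_rat[OF rb])
  then show ?thesis by auto
qed

lemma bq_unit_conj:
  assumes rb: "real_biquadratic D1 D2" and "bq_unit D1 D2 x"
  shows "bq_unit D1 D2 (bq_conj \<tau> x)"
proof -
  have val_conj: "bq_val D1 D2 (bq_conj \<tau> z) = bq_emb D1 D2 \<tau> z" for z
    by (simp add: bq_emb_conj gal_comp_def)
  obtain y where y: "algebraic_int (bq_val D1 D2 y)" "bq_val D1 D2 x * bq_val D1 D2 y = of_rat 1"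
    using assms(2) by (auto simp: bq_unit_def)
  have "algebraic_int (bq_val D1 D2 (bq_conj \<tau> x))" "algebraic_int (bq_val D1 D2 (bq_conj \<tau> y))"
    using assms(2) y(1) unfolding val_conj by (auto simp: bq_unit_def intro: algebraic_int_bq_emb[OF rb])
  moreover have "bq_val D1 D2 (bq_conj \<tau> x) * bq_val D1 D2 (bq_conj \<tau> y) = 1"
    unfolding val_conj using bq_emb_mult_eq_of_rat[OF rb y(2)] by simp
  ultimately show ?thesis unfolding bq_unit_def by blast
qed

lemma bq_unit_mult:
  assumes rb: "real_biquadratic D1 D2" and "bq_unit D1 D2 x" "bq_unit D1 D2 y"
  shows "bq_unit D1 D2 (bq_mult D1 D2 x y)"
proof -
  obtain x' y' where
    "algebraic_int (bq_val D1 D2 x)" "algebraic_int (bq_val D1 D2 x')" "bq_val D1 D2 x * bq_val D1 D2 x' = 1"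
    "algebraic_int (bq_val D1 D2 y)" "algebraic_int (bq_val D1 D2 y')" "bq_val D1 D2 y * bq_val D1 D2 y' = 1"
    using assms(2,3) by (auto simp: bq_unit_def)
  then have "algebraic_int (bq_val D1 D2 (bq_mult D1 D2 x y))"
    "algebraic_int (bq_val D1 D2 (bq_mult D1 D2 x' y'))"
    "bq_val D1 D2 (bq_mult D1 D2 x y) * bq_val D1 D2 (bq_mult D1 D2 x' y') = 1"
    unfolding bq_emb_mult[OF rb] by (simp_all add: algebraic_int_times mult_ac)
  then show ?thesis unfolding bq_unit_def by blast
qed

lemma bq_unit_of_rat_sign: "bq_unit D1 D2 (bq_of_rat (sign_flip b))"
  unfolding bq_unit_def
  by (intro conjI exI[of _ "bq_of_rat (sign_flip b)"]) (auto simp: sign_flip_def)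

lemma bq_sgn_mult:
  assumes rb: "real_biquadratic D1 D2" and "bq_unit D1 D2 x" "bq_unit D1 D2 y"
  shows "bq_sgn D1 D2 (bq_mult D1 D2 x y) = bq_sgn D1 D2 x + bq_sgn D1 D2 y"
  using bq_unit_emb_nonzero[OF rb assms(2)] bq_unit_emb_nonzero[OF rb assms(3)]
  by (auto simp: Finite_Cartesian_Product.vec_eq_iff bq_sgn_def bq_emb_mult[OF rb] mult_less_0_iff)

lemma bq_sgn_conj: "bq_sgn D1 D2 (bq_conj \<tau> x) = sig_translate \<tau> (bq_sgn D1 D2 x)"
  by (simp add: bq_sgn_def sig_translate_def bq_emb_conj)

lemma bq_sgn_of_rat_sign: "bq_sgn D1 D2 (bq_of_rat (sign_flip b)) = (if b then all_ones else 0)"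
  by (auto simp: Finite_Cartesian_Product.vec_eq_iff bq_sgn_def all_ones_def sign_flip_def)

lemma bq_emb_sum: "(\<Sum>\<sigma>\<in>UNIV. bq_emb D1 D2 \<sigma> x) = 4 * of_rat (fst x)"
  by (cases x) (simp add: sum_UNIV_bool_pair bq_emb_eq_bq_eval bq_eval_def sign_flip_def algebra_simps)

lemma bq_sgn_sqrt_weight_two:
  assumes rb: "real_biquadratic D1 D2" and "D > 1" "squarefree D"
    and "(bq_val D1 D2 s)\<^sup>2 = of_int D"
  shows "parity (bq_sgn D1 D2 s) = 0 \<and> bq_sgn D1 D2 s \<noteq> 0 \<and> bq_sgn D1 D2 s \<noteq> all_ones"
  unfolding bq_sgn_def
proof (rule sign_pattern_weight_two)
  show "sqrt (of_int D) \<notin> \<rat>" "sqrt (of_int D) > 0"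
    using sqrt_squarefree_irrational[OF assms(3,2)] assms(2) by simp_all
  fix \<sigma>
  have "bq_val D1 D2 s * bq_val D1 D2 s = of_rat (of_int D)"
    using assms(4) by (simp add: power2_eq_square)
  then have "bq_emb D1 D2 \<sigma> s * bq_emb D1 D2 \<sigma> s = of_rat (of_int D)"
    by (rule bq_emb_mult_eq_of_rat[OF rb])
  then have "\<bar>bq_emb D1 D2 \<sigma> s\<bar> = sqrt (of_int D)"
    using real_sqrt_abs[of "bq_emb D1 D2 \<sigma> s"] by (simp add: power2_eq_square)
  then show "bq_emb D1 D2 \<sigma> s = sqrt (of_int D) \<or> bq_emb D1 D2 \<sigma> s = - sqrt (of_int D)"
    by linarith
qed (simp add: bq_emb_sum)

definition unit_signatures :: "int \<Rightarrow> int \<Rightarrow> signature set" where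
  "unit_signatures D1 D2 = bq_sgn D1 D2 ` {x. bq_unit D1 D2 x}"

lemma unit_signaturesI: "bq_unit D1 D2 x \<Longrightarrow> bq_sgn D1 D2 x \<in> unit_signatures D1 D2"
  by (simp add: unit_signatures_def)

lemma unit_signaturesE:
  assumes "y \<in> unit_signatures D1 D2"
  obtains x where "bq_unit D1 D2 x" "y = bq_sgn D1 D2 x"
  using assms by (auto simp: unit_signatures_def)

lemma unit_signatures_subspace:
  assumes rb: "real_biquadratic D1 D2"
  shows "vec.subspace (unit_signatures D1 D2)"
proof -
  have zero: "0 \<in> unit_signatures D1 D2"
    using unit_signaturesI[OF bq_unit_of_rat_sign, of D1 D2 False] by (simp add: bq_sgn_of_rat_sign)
  moreover have "x + y \<in> unit_signatures D1 D2"
    if xy: "x \<in> unit_signatures D1 D2" "y \<in> unit_signatures D1 D2" for x y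
  proof -
    obtain a where a: "bq_unit D1 D2 a" "x = bq_sgn D1 D2 a"
      using xy(1) by (rule unit_signaturesE)
    obtain b where b: "bq_unit D1 D2 b" "y = bq_sgn D1 D2 b"
      using xy(2) by (rule unit_signaturesE)
    have "x + y = bq_sgn D1 D2 (bq_mult D1 D2 a b)"
      using bq_sgn_mult[OF rb a(1) b(1)] a(2) b(2) by simp
    moreover have "bq_unit D1 D2 (bq_mult D1 D2 a b)"
      using bq_unit_mult[OF rb a(1) b(1)] .
    ultimately show ?thesis by (simp add: unit_signaturesI)
  qed
  moreover have "c *s x \<in> unit_signatures D1 D2" if "x \<in> unit_signatures D1 D2" for c :: bit and x
    using zero that by (cases c) auto
  ultimately show ?thesis unfolding vec.subspace_def by blast
qed

lemma unit_signatures_translate: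
  assumes rb: "real_biquadratic D1 D2" and "x \<in> unit_signatures D1 D2"
  shows "sig_translate \<tau> x \<in> unit_signatures D1 D2"
proof -
  obtain a where "bq_unit D1 D2 a" "x = bq_sgn D1 D2 a"
    using assms(2) by (rule unit_signaturesE)
  then show ?thesis
    using unit_signaturesI[OF bq_unit_conj[OF rb]] by (simp add: bq_sgn_conj)
qed

lemma all_ones_unit_signature: "all_ones \<in> unit_signatures D1 D2"
  using unit_signaturesI[OF bq_unit_of_rat_sign, of D1 D2 True] by (simp add: bq_sgn_of_rat_sign)

theorem lemma3p3:
  fixes D1 D2 D :: int and s :: "rat \<times> rat \<times> rat \<times> rat"
  assumes "real_biquadratic D1 D2"
    and "sgnrk D1 D2 \<ge> 3"
    and "D > 1" and "squarefree D"
    and "(bq_val D1 D2 s)\<^sup>2 = of_int D"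
  shows "\<exists>\<eta>. bq_unit D1 D2 \<eta> \<and> bq_sgn D1 D2 \<eta> = bq_sgn D1 D2 s"
proof -
  have "bq_sgn D1 D2 s \<in> unit_signatures D1 D2"
  proof (rule weight_two_in_invariant_subspace)
    show "vec.subspace (unit_signatures D1 D2)"
      using assms(1) by (rule unit_signatures_subspace)
    show "sig_translate \<tau> x \<in> unit_signatures D1 D2" if "x \<in> unit_signatures D1 D2" for \<tau> x
      using assms(1) that by (rule unit_signatures_translate)
    show "all_ones \<in> unit_signatures D1 D2"
      by (rule all_ones_unit_signature)
    show "vec.dim (unit_signatures D1 D2) \<ge> 3"
      using assms(2) by (simp add: sgnrk_def unit_signatures_def)
  qed (use bq_sgn_sqrt_weight_two[OF assms(1,3-5)] in simp_all)
  then obtain \<eta> where "bq_unit D1 D2 \<eta>" "bq_sgn D1 D2 s = bq_sgn D1 D2 \<eta>"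
    by (rule unit_signaturesE)
  then show ?thesis by (intro exI[of _ \<eta>]) simp
qed

end
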